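(* Let $R$ be a commutative ring with identity that is not an integral domain. If the girth of $\Gamma(R)$ is $4$ or $\infty$, then either $\gamma_t(\Gamma(R)) = \gamma(\Gamma(R))$ or $R\cong \mathbb{Z}_2\times D$ for some integral domain $D$.
   Context: All rings are commutative with identity. The zero-divisor graph $\Gamma(R)$ has vertex set $Z(R)^*$ (nonzero zero-divisors); distinct $r,s$ are adjacent iff $rs=0$, and $x$ is adjacent to itself iff $x^2=0$. A dominating set is $X\subseteq Z(R)^*$ such that every vertex not in $X$ is adjacent to some element of $X$; a total dominating set is $X$ such that every vertex (including those in $X$) is adjacent to some element of $X$ (self-adjacency counts). $\gamma,\gamma_t$ are the respective minimum cardinalities. The girth is the length of a shortest cycle through distinct vertices (loops not counted), $\infty$ if none. *)

theory Defs
  imports "HOL-Algebra.Chinese_Remainder" "HOL-Number_Theory.Residues" "HOL-Library.Extended_Nat"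
begin

definition zd_vertices :: "('a, 'b) ring_scheme \<Rightarrow> 'a set" where
  "zd_vertices R = {x \<in> carrier R. x \<noteq> \<zero>\<^bsub>R\<^esub> \<and>
      (\<exists>y \<in> carrier R. y \<noteq> \<zero>\<^bsub>R\<^esub> \<and> x \<otimes>\<^bsub>R\<^esub> y = \<zero>\<^bsub>R\<^esub>)}"

text \<open>Adjacency (for x = y this is the loop condition x^2 = 0).\<close>
definition zd_adj :: "('a, 'b) ring_scheme \<Rightarrow> 'a \<Rightarrow> 'a \<Rightarrow> bool" where
  "zd_adj R x y \<longleftrightarrow> x \<otimes>\<^bsub>R\<^esub> y = \<zero>\<^bsub>R\<^esub>"

definition zd_dominating :: "('a, 'b) ring_scheme \<Rightarrow> 'a set \<Rightarrow> bool" where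
  "zd_dominating R X \<longleftrightarrow> X \<subseteq> zd_vertices R \<and>
     (\<forall>v \<in> zd_vertices R - X. \<exists>x \<in> X. zd_adj R v x)"

definition zd_total_dominating :: "('a, 'b) ring_scheme \<Rightarrow> 'a set \<Rightarrow> bool" where
  "zd_total_dominating R X \<longleftrightarrow> X \<subseteq> zd_vertices R \<and>
     (\<forall>v \<in> zd_vertices R. \<exists>x \<in> X. zd_adj R v x)"

definition ecard :: "'a set \<Rightarrow> enat" where
  "ecard X = (if finite X then enat (card X) else \<infinity>)"

definition zd_domination_number :: "('a, 'b) ring_scheme \<Rightarrow> enat" where
  "zd_domination_number R = (INF X \<in> {X. zd_dominating R X}. ecard X)"

definition zd_total_domination_number :: "('a, 'b) ring_scheme \<Rightarrow> enat" where
  "zd_total_domination_number R = (INF X \<in> {X. zd_total_dominating R X}. ecard X)"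

definition zd_has_cycle :: "('a, 'b) ring_scheme \<Rightarrow> nat \<Rightarrow> bool" where
  "zd_has_cycle R n \<longleftrightarrow> 3 \<le> n \<and> (\<exists>f :: nat \<Rightarrow> 'a. inj_on f {..<n} \<and>
      (\<forall>i < n. f i \<in> zd_vertices R \<and> zd_adj R (f i) (f (Suc i mod n))))"

definition zd_girth :: "('a, 'b) ring_scheme \<Rightarrow> enat" where
  "zd_girth R = (INF n \<in> {n. zd_has_cycle R n}. enat n)"

end

theory Submission
  imports Defs
begin

text \<open>Girth 4 or \<infinity> means that \<Gamma>(R) has no triangles. Then \<Gamma>(R) has a total dominating set
  with at most two vertices: an edge {a, b} if R is reduced, and otherwise {x, b} for a nonzero x
  with x^2 = 0 and a suitable annihilator b. Hence \<gamma> = \<gamma>_t unless \<gamma> = 1, i.e. unless some vertex c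
  is adjacent to all others. If c^2 \<noteq> c, then c or c^2 alone is a total dominating set; if c is
  idempotent, the Peirce decomposition R \<cong> Rc \<times> R(1 - c) has Rc = {0, c} \<cong> \<int>/2, and
  R(1 - c) is a domain because a zero divisor in it would create a triangle with c.\<close>

definition corner_ring :: "('a, 'b) ring_scheme \<Rightarrow> 'a \<Rightarrow> 'a ring" where
  "corner_ring R e = \<lparr>carrier = (\<lambda>r. r \<otimes>\<^bsub>R\<^esub> e) ` carrier R, monoid.mult = (\<otimes>\<^bsub>R\<^esub>), one = e,
     zero = \<zero>\<^bsub>R\<^esub>, add = (\<oplus>\<^bsub>R\<^esub>)\<rparr>"

lemma corner_ring_carrier:
  "carrier (corner_ring R e) = (\<lambda>r. r \<otimes>\<^bsub>R\<^esub> e) ` carrier R"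
  by (simp add: corner_ring_def)

lemma corner_ring_simps [simp]:
  "x \<otimes>\<^bsub>corner_ring R e\<^esub> y = x \<otimes>\<^bsub>R\<^esub> y"
  "\<one>\<^bsub>corner_ring R e\<^esub> = e"
  "\<zero>\<^bsub>corner_ring R e\<^esub> = \<zero>\<^bsub>R\<^esub>"
  "x \<oplus>\<^bsub>corner_ring R e\<^esub> y = x \<oplus>\<^bsub>R\<^esub> y"
  by (simp_all add: corner_ring_def)

lemma RDirProd_simps:
  "(a, b) \<otimes>\<^bsub>RDirProd A B\<^esub> (a', b') = (a \<otimes>\<^bsub>A\<^esub> a', b \<otimes>\<^bsub>B\<^esub> b')"
  "(a, b) \<oplus>\<^bsub>RDirProd A B\<^esub> (a', b') = (a \<oplus>\<^bsub>A\<^esub> a', b \<oplus>\<^bsub>B\<^esub> b')"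
  "\<one>\<^bsub>RDirProd A B\<^esub> = (\<one>\<^bsub>A\<^esub>, \<one>\<^bsub>B\<^esub>)"
  by (simp_all add: RDirProd_def DirProd_def monoid.defs)

context cring begin

lemma corner_ring_memE:
  assumes "x \<in> carrier (corner_ring R e)"
  obtains r where "r \<in> carrier R" "x = r \<otimes> e"
  using assms by (auto simp: corner_ring_carrier)

lemma corner_ring_mem_iff:
  assumes "e \<in> carrier R" "e \<otimes> e = e"
  shows "x \<in> carrier (corner_ring R e) \<longleftrightarrow> x \<in> carrier R \<and> x \<otimes> e = x"
proof
  assume "x \<in> carrier (corner_ring R e)"
  then obtain r where "r \<in> carrier R" "x = r \<otimes> e" by (rule corner_ring_memE)
  thus "x \<in> carrier R \<and> x \<otimes> e = x" using assms by (simp add: m_assoc)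
next
  assume "x \<in> carrier R \<and> x \<otimes> e = x"
  thus "x \<in> carrier (corner_ring R e)" by (force simp: corner_ring_carrier image_iff)
qed

lemma corner_ring_cring:
  assumes e: "e \<in> carrier R" "e \<otimes> e = e"
  shows "cring (corner_ring R e)"
proof (rule cringI)
  note mem = corner_ring_mem_iff[OF e]
  show "abelian_group (corner_ring R e)"
  proof (rule abelian_groupI)
    fix x assume "x \<in> carrier (corner_ring R e)"
    hence x: "x \<in> carrier R" "x \<otimes> e = x" using mem by auto
    have "\<ominus> x \<in> carrier (corner_ring R e)" using x e by (simp add: mem l_minus)
    moreover have "\<ominus> x \<oplus> x = \<zero>" using x by (simp add: l_neg)
    ultimately show "\<exists>y\<in>carrier (corner_ring R e). y \<oplus>\<^bsub>corner_ring R e\<^esub> x = \<zero>\<^bsub>corner_ring R e\<^esub>"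
      by auto
  qed (auto simp: mem e l_distr a_ac)
  show "Group.comm_monoid (corner_ring R e)"
    by (rule comm_monoidI) (auto simp: mem e m_ac)
  show "(x \<oplus>\<^bsub>corner_ring R e\<^esub> y) \<otimes>\<^bsub>corner_ring R e\<^esub> z
          = x \<otimes>\<^bsub>corner_ring R e\<^esub> z \<oplus>\<^bsub>corner_ring R e\<^esub> y \<otimes>\<^bsub>corner_ring R e\<^esub> z"
    if "x \<in> carrier (corner_ring R e)" "y \<in> carrier (corner_ring R e)" "z \<in> carrier (corner_ring R e)"
    for x y z using that by (simp add: mem l_distr)
qed

lemma peirce_decomposition:
  assumes c: "c \<in> carrier R" "c \<otimes> c = c"
  shows "(\<lambda>r. (r \<otimes> c, r \<otimes> (\<one> \<ominus> c)))
           \<in> ring_iso R (RDirProd (corner_ring R c) (corner_ring R (\<one> \<ominus> c)))"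
proof -
  define e where "e = \<one> \<ominus> c"
  have e: "e \<in> carrier R" "e \<otimes> e = e" "c \<otimes> e = \<zero>"
    unfolding e_def using c by algebra+
  have split: "r = r \<otimes> c \<oplus> r \<otimes> e" if "r \<in> carrier R" for r
    unfolding e_def using c that by algebra
  note memc = corner_ring_mem_iff[OF c] and meme = corner_ring_mem_iff[OF e(1,2)]
  have "(\<lambda>r. (r \<otimes> c, r \<otimes> e)) \<in> ring_iso R (RDirProd (corner_ring R c) (corner_ring R e))"
  proof (rule ring_iso_memI)
    show "bij_betw (\<lambda>r. (r \<otimes> c, r \<otimes> e)) (carrier R)
            (carrier (RDirProd (corner_ring R c) (corner_ring R e)))"
      unfolding RDirProd_carrier
    proof (rule bij_betwI')
      fix x y assume "x \<in> carrier R" "y \<in> carrier R"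
      thus "((x \<otimes> c, x \<otimes> e) = (y \<otimes> c, y \<otimes> e)) = (x = y)" using split[of x] split[of y] by auto
    next
      fix x assume "x \<in> carrier R"
      thus "(x \<otimes> c, x \<otimes> e) \<in> carrier (corner_ring R c) \<times> carrier (corner_ring R e)"
        by (auto simp: corner_ring_carrier)
    next
      fix p assume "p \<in> carrier (corner_ring R c) \<times> carrier (corner_ring R e)"
      then obtain y z where p: "p = (y, z)" "y \<in> carrier R" "y \<otimes> c = y" "z \<in> carrier R" "z \<otimes> e = z"
        using memc meme by auto
      have "y \<otimes> e = \<zero>" "z \<otimes> c = \<zero>"
        using p e c by (metis m_assoc m_comm r_null)+
      hence "((y \<oplus> z) \<otimes> c, (y \<oplus> z) \<otimes> e) = p" using p c e by (simp add: l_distr)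
      thus "\<exists>r\<in>carrier R. p = (r \<otimes> c, r \<otimes> e)" using p by (metis add.m_closed)
    qed
  qed (use c e in \<open>auto simp: RDirProd_simps RDirProd_carrier corner_ring_carrier m_ac l_distr r_distr\<close>)
  thus ?thesis unfolding e_def .
qed

end

lemma two_element_ring_iso_residue_ring_2:
  fixes S (structure)
  assumes S: "ring S" and car: "carrier S = {\<zero>, \<one>}" and nontriv: "\<one> \<noteq> \<zero>"
  shows "(\<lambda>x. if x = \<zero> then 0 else 1) \<in> ring_iso S (residue_ring 2)"
proof -
  interpret ring S by fact
  have "\<one> \<oplus> \<one> \<in> {\<zero>, \<one>}" using car by (metis add.m_closed one_closed)
  hence two: "\<one> \<oplus> \<one> = \<zero>" using nontriv by auto
  have car2: "carrier (residue_ring 2) = {0, 1}" by (auto simp: residue_ring_def)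
  show ?thesis
  proof (rule ring_iso_memI)
    show "bij_betw (\<lambda>x. if x = \<zero> then 0 else 1) (carrier S) (carrier (residue_ring 2))"
      unfolding car car2 using nontriv by (auto simp: bij_betw_def inj_on_def)
  qed (use car two nontriv in \<open>auto simp: residue_ring_def\<close>)
qed

lemma zd_dominating_singleton_iff:
  "zd_dominating R {c} \<longleftrightarrow>
     c \<in> zd_vertices R \<and> (\<forall>v\<in>zd_vertices R. v \<noteq> c \<longrightarrow> v \<otimes>\<^bsub>R\<^esub> c = \<zero>\<^bsub>R\<^esub>)"
  by (auto simp: zd_dominating_def zd_adj_def)

lemma zd_total_dominating_imp_dominating:
  "zd_total_dominating R X \<Longrightarrow> zd_dominating R X"
  by (auto simp: zd_total_dominating_def zd_dominating_def)

lemma zd_domination_number_le_total: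
  "zd_domination_number R \<le> zd_total_domination_number R"
  unfolding zd_domination_number_def zd_total_domination_number_def
  by (rule INF_superset_mono) (auto intro: zd_total_dominating_imp_dominating)

lemma zd_total_domination_number_le_card:
  "zd_total_dominating R Y \<Longrightarrow> finite Y \<Longrightarrow> zd_total_domination_number R \<le> enat (card Y)"
  unfolding zd_total_domination_number_def
  by (rule INF_lower2[of Y]) (auto simp: ecard_def)

lemma zd_domination_numbers_no_vertices:
  assumes "zd_vertices R = {}"
  shows "zd_domination_number R = 0" and "zd_total_domination_number R = 0"
proof -
  have "zd_total_dominating R {}" using assms by (simp add: zd_total_dominating_def)
  hence "zd_total_domination_number R = 0"
    using zd_total_domination_number_le_card[of R "{}"] by (simp add: zero_enat_def[symmetric])
  thus "zd_total_domination_number R = 0" "zd_domination_number R = 0"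
    using zd_domination_number_le_total[of R] by simp_all
qed

lemma zd_domination_number_ge_card:
  assumes "\<And>X. zd_dominating R X \<Longrightarrow> finite X \<Longrightarrow> n \<le> card X"
  shows "enat n \<le> zd_domination_number R"
  unfolding zd_domination_number_def
  by (rule INF_greatest) (auto simp: ecard_def assms)

lemma zd_domination_number_ge_1:
  assumes "zd_vertices R \<noteq> {}"
  shows "1 \<le> zd_domination_number R"
  using zd_domination_number_ge_card[of R 1] assms
  by (fastforce simp: one_enat_def zd_dominating_def Suc_le_eq card_gt_0_iff)

lemma zd_domination_number_ge_2:
  assumes "zd_vertices R \<noteq> {}" and "\<And>c. \<not> zd_dominating R {c}"
  shows "2 \<le> zd_domination_number R"
proof -
  have "2 \<le> card X" if "zd_dominating R X" "finite X" for X
    using that assms card_1_singleton_iff[of X]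
    by (cases "card X") (auto simp: zd_dominating_def)
  thus ?thesis using zd_domination_number_ge_card[of R 2] by (simp add: numeral_eq_enat)
qed

lemma zd_girth_le: "zd_has_cycle R n \<Longrightarrow> zd_girth R \<le> enat n"
  unfolding zd_girth_def by (rule INF_lower) simp

context cring begin

lemma zd_vertices_memI:
  "x \<in> carrier R \<Longrightarrow> x \<noteq> \<zero> \<Longrightarrow> y \<in> carrier R \<Longrightarrow> y \<noteq> \<zero> \<Longrightarrow> x \<otimes> y = \<zero> \<Longrightarrow> x \<in> zd_vertices R"
  by (auto simp: zd_vertices_def)

lemma zd_has_cycle_3I:
  assumes "p \<in> carrier R" "q \<in> carrier R" "r \<in> carrier R"
    and "p \<noteq> \<zero>" "q \<noteq> \<zero>" "r \<noteq> \<zero>" and "p \<noteq> q" "q \<noteq> r" "p \<noteq> r"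
    and "p \<otimes> q = \<zero>" "q \<otimes> r = \<zero>" "p \<otimes> r = \<zero>"
  shows "zd_has_cycle R 3"
proof -
  define f :: "nat \<Rightarrow> 'a" where "f i = (if i = 0 then p else if i = 1 then q else r)" for i
  have "{..<3::nat} = {0, 1, 2}" by auto
  have rp: "r \<otimes> p = \<zero>" using assms by (simp add: m_comm)
  have V: "p \<in> zd_vertices R" "q \<in> zd_vertices R" "r \<in> zd_vertices R"
    using assms zd_vertices_memI rp by blast+
  show ?thesis
    unfolding zd_has_cycle_def
  proof (intro conjI exI[of _ f] allI impI)
    show "inj_on f {..<3}" using assms \<open>{..<3::nat} = {0, 1, 2}\<close> by (auto simp: f_def inj_on_def)
    fix i :: nat assume "i < 3"
    hence "i = 0 \<or> i = 1 \<or> i = 2" by auto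
    thus "f i \<in> zd_vertices R" "zd_adj R (f i) (f (Suc i mod 3))"
      using V assms rp by (auto simp: f_def zd_adj_def)
  qed simp
qed

lemma zd_total_dominating_edge:
  assumes tf: "\<not> zd_has_cycle R 3"
    and reduced: "\<And>y. y \<in> carrier R \<Longrightarrow> y \<otimes> y = \<zero> \<Longrightarrow> y = \<zero>"
    and a: "a \<in> carrier R" "a \<noteq> \<zero>" and b: "b \<in> carrier R" "b \<noteq> \<zero>" and ab: "a \<otimes> b = \<zero>"
  shows "zd_total_dominating R {a, b}"
proof -
  have "{a, b} \<subseteq> zd_vertices R" using zd_vertices_memI a b ab by (metis empty_subsetI insert_subset m_comm)
  moreover have "v \<otimes> a = \<zero> \<or> v \<otimes> b = \<zero>" if v: "v \<in> zd_vertices R" for v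
  proof (rule ccontr)
    assume "\<not> ?thesis"
    hence va: "v \<otimes> a \<noteq> \<zero>" and vb: "v \<otimes> b \<noteq> \<zero>" by auto
    from v obtain w where vc: "v \<in> carrier R" and w: "w \<in> carrier R" "w \<noteq> \<zero>" "v \<otimes> w = \<zero>"
      by (auto simp: zd_vertices_def)
    have "(v \<otimes> a) \<otimes> (v \<otimes> b) = (v \<otimes> v) \<otimes> (a \<otimes> b)"
      "(v \<otimes> b) \<otimes> w = b \<otimes> (v \<otimes> w)" "(v \<otimes> a) \<otimes> w = a \<otimes> (v \<otimes> w)"
      using a b vc w by algebra+
    hence prods: "(v \<otimes> a) \<otimes> (v \<otimes> b) = \<zero>" "(v \<otimes> b) \<otimes> w = \<zero>" "(v \<otimes> a) \<otimes> w = \<zero>"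
      using a b vc w ab by simp_all
    moreover have "(v \<otimes> a) \<otimes> (v \<otimes> a) \<noteq> \<zero>" "(v \<otimes> b) \<otimes> (v \<otimes> b) \<noteq> \<zero>"
      using reduced[of "v \<otimes> a"] reduced[of "v \<otimes> b"] va vb a b vc by auto
    ultimately have "v \<otimes> a \<noteq> v \<otimes> b" "v \<otimes> b \<noteq> w" "v \<otimes> a \<noteq> w" by metis+
    thus False using zd_has_cycle_3I[of "v \<otimes> a" "v \<otimes> b" w] prods tf va vb w vc a b by auto
  qed
  ultimately show ?thesis by (auto simp: zd_total_dominating_def zd_adj_def)
qed

lemma annihilator_annihilates_square_zero:
  assumes tf: "\<not> zd_has_cycle R 3" and x: "x \<in> carrier R" "x \<noteq> \<zero>" "x \<otimes> x = \<zero>"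
    and z: "z \<in> carrier R" "z \<otimes> x \<noteq> \<zero>" and w: "w \<in> carrier R" "z \<otimes> w = \<zero>"
  shows "w \<otimes> x = \<zero>"
proof -
  define y where "y = z \<otimes> x"
  have "x \<otimes> y = z \<otimes> (x \<otimes> x)" "y \<otimes> y = (z \<otimes> z) \<otimes> (x \<otimes> x)" "w \<otimes> y = (z \<otimes> w) \<otimes> x"
    unfolding y_def using x(1) z(1) w(1) by algebra+
  hence y: "y \<in> carrier R" "y \<noteq> \<zero>" "x \<otimes> y = \<zero>" "y \<otimes> y = \<zero>" "w \<otimes> y = \<zero>"
    using x z w by (simp_all add: y_def)
  have "x \<oplus> y = \<zero>" if "y \<noteq> x"
  proof (rule ccontr)
    assume "x \<oplus> y \<noteq> \<zero>"
    moreover have "x \<otimes> (x \<oplus> y) = \<zero>" "y \<otimes> (x \<oplus> y) = \<zero>" using x y by (simp_all add: r_distr m_comm)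
    moreover have "x \<noteq> x \<oplus> y" "y \<noteq> x \<oplus> y" using x y by (simp_all add: a_comm)
    ultimately show False using zd_has_cycle_3I[of x y "x \<oplus> y"] tf x y that by auto
  qed
  hence "y = x \<or> y = \<ominus> x" using x y minus_equality[of y x] by (auto simp: a_comm)
  thus ?thesis using y x w by (auto simp: r_minus)
qed

lemma square_zero_annihilator_square_nonzero:
  assumes tf: "\<not> zd_has_cycle R 3" and x: "x \<in> carrier R" "x \<noteq> \<zero>" "x \<otimes> x = \<zero>"
    and u: "u \<in> carrier R" "u \<noteq> \<zero>" "u \<otimes> x = \<zero>" "u \<noteq> x" "u \<noteq> \<ominus> x"
  shows "u \<otimes> u \<noteq> \<zero>"
proof
  assume "u \<otimes> u = \<zero>"
  moreover have "u \<oplus> x \<noteq> \<zero>" using u x minus_equality[of u x] by auto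
  moreover have "u \<oplus> x \<noteq> u" "u \<oplus> x \<noteq> x" using u x by (simp_all add: a_comm)
  ultimately show False
    using zd_has_cycle_3I[of u x "u \<oplus> x"] tf u x by (auto simp: r_distr m_comm)
qed

text \<open>The nonzero element c = b w kills x, z and v. If v b \<noteq> 0, then u = b v, x and c form a
  triangle, unless u = c is square-zero, which the previous lemma rules out.\<close>

lemma annihilator_shared_off_square_zero:
  assumes tf: "\<not> zd_has_cycle R 3" and x: "x \<in> carrier R" "x \<noteq> \<zero>" "x \<otimes> x = \<zero>"
    and z: "z \<in> carrier R" "z \<otimes> x \<noteq> \<zero>" and b: "b \<in> carrier R" "b \<noteq> \<zero>" "z \<otimes> b = \<zero>"
    and v: "v \<in> zd_vertices R" "v \<otimes> x \<noteq> \<zero>"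
  shows "v \<otimes> b = \<zero>"
proof -
  from v obtain w where vc: "v \<in> carrier R" and w: "w \<in> carrier R" "w \<noteq> \<zero>" "v \<otimes> w = \<zero>"
    by (auto simp: zd_vertices_def)
  have bx: "b \<otimes> x = \<zero>" and wx: "w \<otimes> x = \<zero>"
    using annihilator_annihilates_square_zero[OF tf x] z b vc v(2) w by blast+
  show ?thesis
  proof (cases "w = b")
    case False
    define c where "c = b \<otimes> w"
    have "z \<otimes> c = (z \<otimes> b) \<otimes> w" "c \<otimes> x = (b \<otimes> x) \<otimes> w" "v \<otimes> c = b \<otimes> (v \<otimes> w)"
      unfolding c_def using b(1) w(1) x(1) z(1) vc by algebra+
    hence c: "c \<in> carrier R" "z \<otimes> c = \<zero>" "c \<otimes> x = \<zero>" "v \<otimes> c = \<zero>"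
      using b w bx by (simp_all add: c_def)
    have "x \<noteq> b" "x \<noteq> w" using z b w vc v(2) by auto
    hence "c \<noteq> \<zero>" using zd_has_cycle_3I[of x b w] tf x b w bx wx False
      by (auto simp: c_def m_comm)
    moreover have "c \<noteq> x" "c \<noteq> \<ominus> x" using c z x by (auto simp: r_minus)
    ultimately have csq: "c \<otimes> c \<noteq> \<zero>"
      using square_zero_annihilator_square_nonzero[OF tf x] c by blast
    show ?thesis
    proof (rule ccontr)
      define u where "u = b \<otimes> v"
      assume "v \<otimes> b \<noteq> \<zero>"
      hence "u \<noteq> \<zero>" using u_def b vc m_comm by simp
      moreover have "u \<otimes> x = v \<otimes> (b \<otimes> x)" "z \<otimes> u = (z \<otimes> b) \<otimes> v" "u \<otimes> c = (b \<otimes> b) \<otimes> (v \<otimes> w)"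
        unfolding u_def c_def using b(1) vc x(1) z(1) w(1) by algebra+
      hence "u \<in> carrier R" "u \<otimes> x = \<zero>" "z \<otimes> u = \<zero>" "u \<otimes> c = \<zero>"
        using b vc w bx by (simp_all add: u_def)
      moreover have "u \<noteq> x" "u \<noteq> c" using calculation z csq by auto
      ultimately show False using zd_has_cycle_3I[of x u c] tf x c \<open>c \<noteq> \<zero>\<close> \<open>c \<noteq> x\<close>
        by (auto simp: m_comm)
    qed
  qed (use w in simp)
qed

lemma zd_total_dominating_square_zero:
  assumes tf: "\<not> zd_has_cycle R 3" and x: "x \<in> carrier R" "x \<noteq> \<zero>" "x \<otimes> x = \<zero>"
  shows "\<exists>Y. zd_total_dominating R Y \<and> finite Y \<and> card Y \<le> 2"
proof (cases "\<forall>v\<in>zd_vertices R. v \<otimes> x = \<zero>")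
  case True
  hence "zd_total_dominating R {x}"
    using zd_vertices_memI x by (auto simp: zd_total_dominating_def zd_adj_def)
  thus ?thesis by (intro exI[of _ "{x}"]) auto
next
  case False
  then obtain z where "z \<in> zd_vertices R" and zx: "z \<otimes> x \<noteq> \<zero>" by auto
  then obtain b where z: "z \<in> carrier R" and b: "b \<in> carrier R" "b \<noteq> \<zero>" "z \<otimes> b = \<zero>"
    by (auto simp: zd_vertices_def)
  have "b \<otimes> x = \<zero>" using annihilator_annihilates_square_zero[OF tf x z zx] b by blast
  hence "{x, b} \<subseteq> zd_vertices R" using zd_vertices_memI x b by blast
  moreover have "v \<otimes> x = \<zero> \<or> v \<otimes> b = \<zero>" if "v \<in> zd_vertices R" for v
    using annihilator_shared_off_square_zero[OF tf x z zx b] that by blast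
  ultimately have "zd_total_dominating R {x, b}"
    by (auto simp: zd_total_dominating_def zd_adj_def)
  thus ?thesis by (intro exI[of _ "{x, b}"]) (auto simp: card_insert_if)
qed

lemma zd_total_domination_number_le_2:
  assumes tf: "\<not> zd_has_cycle R 3" and "zd_vertices R \<noteq> {}"
  shows "zd_total_domination_number R \<le> 2"
proof -
  have "\<exists>Y. zd_total_dominating R Y \<and> finite Y \<and> card Y \<le> 2"
  proof (cases "\<exists>x\<in>carrier R. x \<noteq> \<zero> \<and> x \<otimes> x = \<zero>")
    case True
    thus ?thesis using zd_total_dominating_square_zero[OF tf] by blast
  next
    case False
    obtain a b where "a \<in> carrier R" "a \<noteq> \<zero>" "b \<in> carrier R" "b \<noteq> \<zero>" "a \<otimes> b = \<zero>"
      using assms(2) by (auto simp: zd_vertices_def)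
    hence "zd_total_dominating R {a, b}" using zd_total_dominating_edge[OF tf] False by blast
    thus ?thesis by (intro exI[of _ "{a, b}"]) (auto simp: card_insert_if)
  qed
  then obtain Y where "zd_total_dominating R Y" "finite Y" "card Y \<le> 2" by blast
  hence "zd_total_domination_number R \<le> enat (card Y)" "enat (card Y) \<le> 2"
    using zd_total_domination_number_le_card by (auto simp: numeral_eq_enat)
  thus ?thesis by (rule order.trans)
qed

lemma zd_total_dominating_singleton:
  assumes dom: "zd_dominating R {c}" and not_idem: "c \<otimes> c \<noteq> c"
  shows "\<exists>y. zd_total_dominating R {y}"
proof -
  from dom have cV: "c \<in> zd_vertices R" and univ: "\<And>v. v \<in> zd_vertices R \<Longrightarrow> v \<noteq> c \<Longrightarrow> v \<otimes> c = \<zero>"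
    by (auto simp: zd_dominating_singleton_iff)
  then obtain a where c: "c \<in> carrier R" "c \<noteq> \<zero>" and a: "a \<in> carrier R" "a \<noteq> \<zero>" "c \<otimes> a = \<zero>"
    by (auto simp: zd_vertices_def)
  show ?thesis
  proof (cases "c \<otimes> c = \<zero>")
    case True
    hence "zd_total_dominating R {c}" using cV univ by (auto simp: zd_total_dominating_def zd_adj_def)
    thus ?thesis ..
  next
    case False
    define d where "d = c \<otimes> c"
    have "d \<otimes> a = \<zero>" using c a by (simp add: d_def m_assoc)
    hence dV: "d \<in> zd_vertices R" using zd_vertices_memI False c a by (simp add: d_def)
    hence dc: "d \<otimes> c = \<zero>" using univ not_idem by (simp add: d_def)
    have "v \<otimes> d = \<zero>" if "v \<in> zd_vertices R" for v
    proof (cases "v = c")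
      case True thus ?thesis using dc c by (simp add: d_def m_comm)
    next
      case False
      hence "v \<otimes> c = \<zero>" using univ that by blast
      thus ?thesis using that c by (simp add: d_def zd_vertices_def flip: m_assoc)
    qed
    hence "zd_total_dominating R {d}" using dV by (auto simp: zd_total_dominating_def zd_adj_def)
    thus ?thesis ..
  qed
qed

lemma zd_vertex_one_minus_nonzero:
  assumes "c \<in> zd_vertices R"
  shows "\<one> \<ominus> c \<noteq> \<zero>"
proof
  obtain a where c: "c \<in> carrier R" and a: "a \<in> carrier R" "a \<noteq> \<zero>" "c \<otimes> a = \<zero>"
    using assms by (auto simp: zd_vertices_def)
  assume "\<one> \<ominus> c = \<zero>"
  moreover have "c \<oplus> (\<one> \<ominus> c) = \<one>" using c by algebra
  ultimately show False using a c by auto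
qed

lemma zd_dominating_idempotent_mult:
  assumes dom: "zd_dominating R {c}" and idem: "c \<otimes> c = c" and r: "r \<in> carrier R"
  shows "r \<otimes> c = \<zero> \<or> r \<otimes> c = c"
proof (rule ccontr)
  assume rc: "\<not> ?thesis"
  from dom have cV: "c \<in> zd_vertices R" and univ: "\<And>v. v \<in> zd_vertices R \<Longrightarrow> v \<noteq> c \<Longrightarrow> v \<otimes> c = \<zero>"
    by (auto simp: zd_dominating_singleton_iff)
  hence c: "c \<in> carrier R" by (simp add: zd_vertices_def)
  have "(r \<otimes> c) \<otimes> (\<one> \<ominus> c) = r \<otimes> (c \<ominus> c \<otimes> c)" using r c by algebra
  hence "(r \<otimes> c) \<otimes> (\<one> \<ominus> c) = \<zero>" using r c idem by (simp add: a_minus_def r_neg)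
  hence "r \<otimes> c \<in> zd_vertices R"
    using zd_vertices_memI[of "r \<otimes> c", OF _ _ _ zd_vertex_one_minus_nonzero[OF cV]] rc r c by blast
  hence "(r \<otimes> c) \<otimes> c = \<zero>" using univ rc by blast
  moreover have "(r \<otimes> c) \<otimes> c = r \<otimes> c" using r c idem by (simp add: m_assoc)
  ultimately show False using rc by simp
qed

lemma corner_ring_complement_domain:
  assumes tf: "\<not> zd_has_cycle R 3" and dom: "zd_dominating R {c}" and idem: "c \<otimes> c = c"
  shows "domain (corner_ring R (\<one> \<ominus> c))"
proof -
  from dom have cV: "c \<in> zd_vertices R" and univ: "\<And>v. v \<in> zd_vertices R \<Longrightarrow> v \<noteq> c \<Longrightarrow> v \<otimes> c = \<zero>"
    by (auto simp: zd_dominating_singleton_iff)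
  hence c: "c \<in> carrier R" "c \<noteq> \<zero>" by (auto simp: zd_vertices_def)
  define e where "e = \<one> \<ominus> c"
  have e: "e \<in> carrier R" "e \<otimes> e = e" "e \<otimes> c = \<zero>"
    unfolding e_def using c idem by algebra+
  note mem = corner_ring_mem_iff[OF e(1,2)]
  have "e \<noteq> \<zero>" unfolding e_def by (rule zd_vertex_one_minus_nonzero[OF cV])
  moreover have "x = \<zero> \<or> y = \<zero>"
    if xy: "x \<in> carrier (corner_ring R e)" "y \<in> carrier (corner_ring R e)" "x \<otimes> y = \<zero>" for x y
  proof (rule ccontr)
    assume nz: "\<not> ?thesis"
    have xyR: "x \<in> carrier R" "y \<in> carrier R" using xy mem by auto
    have "x \<otimes> c = (x \<otimes> e) \<otimes> c" "y \<otimes> c = (y \<otimes> e) \<otimes> c" using xy mem by auto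
    hence xc: "x \<otimes> c = \<zero>" "y \<otimes> c = \<zero>" using xyR e c by (simp_all add: m_assoc)
    hence "x \<noteq> c" "y \<noteq> c" using idem c by auto
    show False
    proof (cases "x = y")
      case False
      thus False using zd_has_cycle_3I[of x y c] tf xyR c nz xy xc \<open>x \<noteq> c\<close> \<open>y \<noteq> c\<close>
        by (auto simp: m_comm)
    next
      case True
      \<comment> \<open>then c + x is a vertex other than c that does not annihilate c\<close>
      define v where "v = c \<oplus> x"
      have "v \<otimes> x = c \<otimes> x \<oplus> x \<otimes> y" "v \<otimes> c = c \<otimes> c \<oplus> x \<otimes> c"
        unfolding v_def using True c xyR by (simp_all add: l_distr)
      hence "v \<otimes> x = \<zero>" and vc: "v \<otimes> c = c" using xy xc idem c xyR by (simp_all add: m_comm)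
      moreover have "v \<noteq> \<zero>" using vc c by auto
      ultimately have "v \<in> zd_vertices R" using zd_vertices_memI[of v x] c xyR nz by (simp add: v_def)
      moreover have "v \<noteq> c" using c xyR nz True by (simp add: v_def)
      ultimately show False using univ vc c by auto
    qed
  qed
  ultimately show ?thesis unfolding e_def[symmetric]
    by (intro domainI corner_ring_cring e) auto
qed

lemma zd_dominating_idempotent_iso:
  assumes tf: "\<not> zd_has_cycle R 3" and dom: "zd_dominating R {c}" and idem: "c \<otimes> c = c"
  shows "\<exists>D :: 'a ring. domain D \<and> R \<simeq> RDirProd (residue_ring 2) D"
proof -
  have c: "c \<in> carrier R" "c \<noteq> \<zero>" using dom by (auto simp: zd_dominating_def zd_vertices_def)
  note mem = corner_ring_mem_iff[OF c(1) idem]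
  have "carrier (corner_ring R c) = {\<zero>, c}"
  proof (intro equalityI subsetI)
    fix x assume "x \<in> carrier (corner_ring R c)"
    thus "x \<in> {\<zero>, c}" using zd_dominating_idempotent_mult[OF dom idem, of x] mem by auto
  next
    fix x assume "x \<in> {\<zero>, c}"
    thus "x \<in> carrier (corner_ring R c)" using c idem by (auto simp: mem)
  qed
  moreover have "ring (corner_ring R c)" using corner_ring_cring[OF c(1) idem] by (simp add: cring_def)
  ultimately obtain f where "f \<in> ring_iso (corner_ring R c) (residue_ring 2)"
    using two_element_ring_iso_residue_ring_2[of "corner_ring R c"] c by auto
  hence "(\<lambda>(r, t). (f r, t)) \<in> ring_iso (RDirProd (corner_ring R c) (corner_ring R (\<one> \<ominus> c)))
                                        (RDirProd (residue_ring 2) (corner_ring R (\<one> \<ominus> c)))"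
    by (rule RDirProd_iso4)
  hence "R \<simeq> RDirProd (residue_ring 2) (corner_ring R (\<one> \<ominus> c))"
    using ring_iso_set_trans[OF peirce_decomposition[OF c(1) idem]] by (auto simp: is_ring_iso_def)
  thus ?thesis using corner_ring_complement_domain[OF tf dom idem] by blast
qed

end

theorem corollary3p6:
  fixes R :: "('a, 'b) ring_scheme"
  assumes "cring R"
    and "\<not> domain R"
    and "zd_girth R = 4 \<or> zd_girth R = \<infinity>"
  shows "zd_total_domination_number R = zd_domination_number R
         \<or> (\<exists>D :: 'a ring. domain D \<and> R \<simeq> RDirProd (residue_ring 2) D)"
proof -
  interpret cring R by fact
  have tf: "\<not> zd_has_cycle R 3"
    using assms(3) zd_girth_le[of R 3] by (auto simp: numeral_eq_enat)
  show ?thesis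
  proof (cases "zd_vertices R = {}")
    case True
    thus ?thesis by (simp add: zd_domination_numbers_no_vertices)
  next
    case V: False
    have le: "zd_domination_number R \<le> zd_total_domination_number R"
      by (rule zd_domination_number_le_total)
    show ?thesis
    proof (cases "\<exists>c. zd_dominating R {c}")
      case False
      hence "2 \<le> zd_domination_number R" using zd_domination_number_ge_2[OF V] by blast
      thus ?thesis using le zd_total_domination_number_le_2[OF tf V] by auto
    next
      case True
      then obtain c where c: "zd_dominating R {c}" ..
      show ?thesis
      proof (cases "c \<otimes>\<^bsub>R\<^esub> c = c")
        case True
        thus ?thesis using zd_dominating_idempotent_iso[OF tf c] by blast
      next
        case False
        then obtain y where "zd_total_dominating R {y}" using zd_total_dominating_singleton[OF c] by blast
        hence "zd_total_domination_number R \<le> 1"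
          using zd_total_domination_number_le_card[of R "{y}"] by (simp add: one_enat_def)
        thus ?thesis using le zd_domination_number_ge_1[OF V] by auto
      qed
    qed
  qed
qed

end
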